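(* Let $d,m,n\ge1$, $\gamma\in[0,1)$, $\alpha,\beta>0$ and $D=3d+2m+2$. Let $\mathbf P,\mathbf V\in\mathbb R^{D\times D}$ be partitioned conformally with $D=(2d+m+1)+(d+m+1)$ as $\mathbf P=\begin{bmatrix}\mathbf P_{11}&\mathbf P_{12}\\ \mathbf P_{21}&\mathbf P_{22}\end{bmatrix}$, $\mathbf V=\begin{bmatrix}\mathbf V_{11}&\mathbf V_{12}\\ \mathbf V_{21}&\mathbf V_{22}\end{bmatrix}$, and suppose $$\mathbf P_{12}=\begin{bmatrix}\mathbf 0_{d\times1}&\mathbf 0_{d\times m}&-\mathbf I_d\\ \mathbf 0_{d\times1}&\mathbf 0_{d\times m}&\mathbf I_d\\ 1&\mathbf 0_{1\times m}&\mathbf 0_{1\times d}\\ \mathbf 0_{m\times1}&\mathbf 0_{m\times m}&\mathbf 0_{m\times d}\end{bmatrix},\qquad \mathbf P_{22}=\mathbf 0,$$ the last $d+m$ rows of $\mathbf V_{21}$ equal $\begin{bmatrix}\mathbf 0_{m\times d}&\mathbf 0_{m\times d}&\mathbf 0_{m\times1}&\alpha\mathbf I_m\\ \beta\mathbf I_d&\mathbf 0_{d\times d}&\mathbf 0_{d\times1}&\mathbf 0_{d\times m}\end{bmatrix}$, the last $d+m$ rows of $\mathbf V_{22}$ are zero, and $\mathbf P_{11},\mathbf P_{21},\mathbf V_{11},\mathbf V_{12}$ and the first rows of $\mathbf V_{21},\mathbf V_{22}$ are arbitrary. Then for every $c\ne0$ and every input, $\mathsf{TF}_{(c\mathbf P,c^{-1}\mathbf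 V)}(\mathbf H)=[\boldsymbol\lambda_{\mathrm{AC}};\mathbf w_{\mathrm{AC}}]$, i.e. the transformer exactly implements the batch actor-critic update.
   Context: A linear self-attention block with parameters $(\mathbf P,\mathbf V)$ maps $\mathbf H\in\mathbb R^{D\times(n+1)}$ to $\mathbf H_{\mathrm{out}}=\mathbf H+\frac1n(\mathbf V\mathbf H)(\mathbf H^\top\mathbf P\mathbf H)$; here the readout $\mathsf{TF}_{(\mathbf P,\mathbf V)}(\mathbf H)\in\mathbb R^{m+d}$ is the vector of the last $d+m$ entries of the last column of $\mathbf H_{\mathrm{out}}$. Actor-critic data: value feature map $\boldsymbol\phi_V:\mathcal S\to\mathbb R^d$, policy feature map $\boldsymbol\phi_\pi:\mathcal S\times\mathcal A\to\mathbb R^m$ (finite action set), actor parameter $\boldsymbol\lambda\in\mathbb R^m$, critic parameter $\mathbf w\in\mathbb R^d$, softmax policy $\pi_{\boldsymbol\lambda}(a\mid s)\propto\exp(\boldsymbol\lambda^\top\boldsymbol\phi_\pi(s,a))$, score $\mathbf g_{\boldsymbol\lambda}(s,a)=\boldsymbol\phi_\pi(s,a)-\sum_b\boldsymbol\phi_\pi(s,b)\pi_{\boldsymbol\lambda}(b\mid s)$, and a trajectory $(s_0,a_0,r_1,\dots,r_n,s_n,a_n)$. Let $\delta_i=r_{i+1}+\gamma\mathbf w^\top\boldsymbol\phi_V(s_{i+1})-\mathbf w^\top\boldsymbol\phi_V(s_i)$. The batch actor-critic update is $\mathbf w_{\mathrm{AC}}=\mathbf w+\frac{\beta}{n}\sum_{i=0}^{n-1}\delta_i\boldsymbol\phi_V(s_i)$,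 $\boldsymbol\lambda_{\mathrm{AC}}=\boldsymbol\lambda+\frac{\alpha}{n}\sum_{i=0}^{n-1}\gamma^i\delta_i\mathbf g_{\boldsymbol\lambda}(s_i,a_i)$. The prompt $\mathbf H\in\mathbb R^{D\times(n+1)}$ has, for $i=0,\dots,n-1$, column $i+1$ equal to $[\boldsymbol\phi_V(s_i);\gamma\boldsymbol\phi_V(s_{i+1});r_{i+1};\gamma^i\mathbf g_{\boldsymbol\lambda}(s_i,a_i);\mathbf 0_{d+m+1}]$, and last column $[\mathbf 0_{2d+m+1};1;\boldsymbol\lambda;\mathbf w]$. *)

theory Defs
  imports Complex_Main
begin

text \<open>Vectors in R^k and matrices are represented as functions on nat (resp. nat x nat),
  with all relevant indices explicitly bounded; indices are 0-based.\<close>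

definition inner_n :: "nat \<Rightarrow> (nat \<Rightarrow> real) \<Rightarrow> (nat \<Rightarrow> real) \<Rightarrow> real" where
  "inner_n k x y = (\<Sum>i<k. x i * y i)"

definition policy :: "nat \<Rightarrow> ('s \<Rightarrow> 'a::finite \<Rightarrow> nat \<Rightarrow> real) \<Rightarrow> (nat \<Rightarrow> real) \<Rightarrow> 's \<Rightarrow> 'a \<Rightarrow> real" where
  "policy m phiP lam s a =
     exp (inner_n m lam (phiP s a)) / (\<Sum>b\<in>UNIV. exp (inner_n m lam (phiP s b)))"

definition score :: "nat \<Rightarrow> ('s \<Rightarrow> 'a::finite \<Rightarrow> nat \<Rightarrow> real) \<Rightarrow> (nat \<Rightarrow> real) \<Rightarrow> 's \<Rightarrow> 'a \<Rightarrow> nat \<Rightarrow> real" where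
  "score m phiP lam s a = (\<lambda>k. phiP s a k - (\<Sum>b\<in>UNIV. phiP s b k * policy m phiP lam s b))"

text \<open>TD error delta_i; rewards r (Suc i) = r_{i+1}, states s i = s_i.\<close>
definition td_err :: "nat \<Rightarrow> real \<Rightarrow> ('s \<Rightarrow> nat \<Rightarrow> real) \<Rightarrow> (nat \<Rightarrow> real) \<Rightarrow> (nat \<Rightarrow> real) \<Rightarrow> (nat \<Rightarrow> 's) \<Rightarrow> nat \<Rightarrow> real" where
  "td_err d gam phiV w r s i =
     r (Suc i) + gam * inner_n d w (phiV (s (Suc i))) - inner_n d w (phiV (s i))"

definition w_AC :: "nat \<Rightarrow> nat \<Rightarrow> real \<Rightarrow> real \<Rightarrow> ('s \<Rightarrow> nat \<Rightarrow> real) \<Rightarrow> (nat \<Rightarrow> real) \<Rightarrow> (nat \<Rightarrow> real) \<Rightarrow> (nat \<Rightarrow> 's) \<Rightarrow> nat \<Rightarrow> real" where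
  "w_AC d n beta gam phiV w r s =
     (\<lambda>k. w k + beta / real n * (\<Sum>i<n. td_err d gam phiV w r s i * phiV (s i) k))"

definition lam_AC :: "nat \<Rightarrow> nat \<Rightarrow> nat \<Rightarrow> real \<Rightarrow> real \<Rightarrow> ('s \<Rightarrow> nat \<Rightarrow> real) \<Rightarrow> ('s \<Rightarrow> 'a::finite \<Rightarrow> nat \<Rightarrow> real)
     \<Rightarrow> (nat \<Rightarrow> real) \<Rightarrow> (nat \<Rightarrow> real) \<Rightarrow> (nat \<Rightarrow> real) \<Rightarrow> (nat \<Rightarrow> 's) \<Rightarrow> (nat \<Rightarrow> 'a) \<Rightarrow> nat \<Rightarrow> real" where
  "lam_AC d m n alpha gam phiV phiP lam w r s a =
     (\<lambda>k. lam k + alpha / real n *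
        (\<Sum>i<n. gam ^ i * td_err d gam phiV w r s i * score m phiP lam (s i) (a i) k))"

text \<open>The prompt H (D x (n+1)), 0-based: column j < n holds the data of step i = j,
  column n is the last column.\<close>
definition ac_prompt :: "nat \<Rightarrow> nat \<Rightarrow> nat \<Rightarrow> real \<Rightarrow> ('s \<Rightarrow> nat \<Rightarrow> real) \<Rightarrow> ('s \<Rightarrow> 'a::finite \<Rightarrow> nat \<Rightarrow> real)
     \<Rightarrow> (nat \<Rightarrow> real) \<Rightarrow> (nat \<Rightarrow> real) \<Rightarrow> (nat \<Rightarrow> real) \<Rightarrow> (nat \<Rightarrow> 's) \<Rightarrow> (nat \<Rightarrow> 'a) \<Rightarrow> nat \<Rightarrow> nat \<Rightarrow> real" where
  "ac_prompt d m n gam phiV phiP lam w r s a = (\<lambda>row j.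
     if j < n then
       (if row < d then phiV (s j) row
        else if row < 2*d then gam * phiV (s (Suc j)) (row - d)
        else if row = 2*d then r (Suc j)
        else if row < 2*d + 1 + m then gam ^ j * score m phiP lam (s j) (a j) (row - (2*d + 1))
        else 0)
     else if j = n then
       (if row < 2*d + m + 1 then 0
        else if row = 2*d + m + 1 then 1
        else if row < 2*d + 2*m + 2 then lam (row - (2*d + m + 2))
        else if row < 3*d + 2*m + 2 then w (row - (2*d + 2*m + 2))
        else 0)
     else 0)"

definition lsa_out :: "nat \<Rightarrow> nat \<Rightarrow> (nat \<Rightarrow> nat \<Rightarrow> real) \<Rightarrow> (nat \<Rightarrow> nat \<Rightarrow> real) \<Rightarrow> (nat \<Rightarrow> nat \<Rightarrow> real) \<Rightarrow> nat \<Rightarrow> nat \<Rightarrow> real" where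
  "lsa_out D n P V H = (\<lambda>i j. H i j + 1 / real n *
     (\<Sum>k\<le>n. (\<Sum>l<D. V i l * H l k) * (\<Sum>p<D. \<Sum>q<D. H p k * P p q * H q j)))"

definition tf_readout :: "nat \<Rightarrow> nat \<Rightarrow> nat \<Rightarrow> (nat \<Rightarrow> nat \<Rightarrow> real) \<Rightarrow> (nat \<Rightarrow> nat \<Rightarrow> real) \<Rightarrow> (nat \<Rightarrow> nat \<Rightarrow> real) \<Rightarrow> nat \<Rightarrow> real" where
  "tf_readout D n e P V H = (\<lambda>k. lsa_out D n P V H (D - e + k) n)"

text \<open>Structural hypotheses on P (blocks P12, P22) with block offset b = 2d+m+1.\<close>
definition P_struct :: "nat \<Rightarrow> nat \<Rightarrow> (nat \<Rightarrow> nat \<Rightarrow> real) \<Rightarrow> bool" where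
  "P_struct d m P \<longleftrightarrow>
     (\<forall>i < 2*d + m + 1. \<forall>c \<le> d + m.
        P i (2*d + m + 1 + c) =
          (if i < d \<and> c = m + 1 + i then -1
           else if d \<le> i \<and> i < 2*d \<and> c = m + 1 + (i - d) then 1
           else if i = 2*d \<and> c = 0 then 1
           else 0)) \<and>
     (\<forall>i \<le> d + m. \<forall>c \<le> d + m. P (2*d + m + 1 + i) (2*d + m + 1 + c) = 0)"

text \<open>Structural hypotheses on V: last d+m rows of V21 and V22.\<close>
definition V_struct :: "nat \<Rightarrow> nat \<Rightarrow> real \<Rightarrow> real \<Rightarrow> (nat \<Rightarrow> nat \<Rightarrow> real) \<Rightarrow> bool" where
  "V_struct d m alpha beta V \<longleftrightarrow>
     (\<forall>i. 1 \<le> i \<and> i \<le> d + m \<longrightarrow>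
        (\<forall>c < 2*d + m + 1.
           V (2*d + m + 1 + i) c =
             (if i \<le> m \<and> c = 2*d + 1 + (i - 1) then alpha
              else if m < i \<and> c = i - m - 1 then beta
              else 0)) \<and>
        (\<forall>c \<le> d + m. V (2*d + m + 1 + i) (2*d + m + 1 + c) = 0))"

end

theory Submission
  imports Defs
begin

text \<open>Rescaling \<open>P\<close> by \<open>c\<close> and \<open>V\<close> by \<open>1/c\<close> cancels in the attention product, so we may take
  \<open>c = 1\<close>. The block structure of \<open>P\<close> turns the last prompt column into the query
  \<open>[-w; w; 1; 0]\<close>, whose inner product with the data column \<open>i\<close> is exactly the TD error
  \<open>\<delta>\<^sub>i\<close> and with the last column is \<open>0\<close>. The block structure of \<open>V\<close> makes the value of
  column \<open>i\<close> in output row \<open>k\<close> equal to \<open>\<alpha>\<gamma>\<^sup>i g(s\<^sub>i,a\<^sub>i)\<^sub>k\<close> (actor rows) or \<open>\<beta>\<phi>\<^sub>V(s\<^sub>i)\<^sub>k\<close>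
  (critic rows), so the residual update of the last column is the batch actor-critic step.\<close>

lemma sum_lessThan_add:
  fixes a e :: nat
  shows "(\<Sum>i<a + e. f i) = (\<Sum>i<a. f i) + (\<Sum>i<e. f (a + i))"
  by (induction e) (simp_all add: add.assoc)

lemma lsa_out_rescale:
  fixes c :: real
  assumes "c \<noteq> 0"
  shows "lsa_out D n (\<lambda>i j. c * P i j) (\<lambda>i j. V i j / c) H = lsa_out D n P V H"
proof -
  have "(\<Sum>l<D. V i l / c * H l k) * (\<Sum>p<D. \<Sum>q<D. H p k * (c * P p q) * H q j)
      = (\<Sum>l<D. V i l * H l k) * (\<Sum>p<D. \<Sum>q<D. H p k * P p q * H q j)" for i j k
    using assms by (simp add: sum_divide_distrib[symmetric] sum_distrib_left[symmetric] ac_simps)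
  then show ?thesis unfolding lsa_out_def by simp
qed

lemma lsa_out_via_query:
  assumes "\<And>p. p < D \<Longrightarrow> (\<Sum>q<D. P p q * H q j) = x p"
  shows "lsa_out D n P V H i j
    = H i j + 1 / real n * (\<Sum>k\<le>n. (\<Sum>l<D. V i l * H l k) * (\<Sum>p<D. H p k * x p))"
proof -
  have "(\<Sum>p<D. \<Sum>q<D. H p k * P p q * H q j) = (\<Sum>p<D. H p k * x p)" for k
    using assms by (simp add: sum_distrib_left[symmetric] mult.assoc)
  then show ?thesis unfolding lsa_out_def by simp
qed

definition ac_query :: "nat \<Rightarrow> (nat \<Rightarrow> real) \<Rightarrow> nat \<Rightarrow> real" where
  "ac_query d w p = (if p < d then - w p else if p < 2*d then w (p - d) else if p = 2*d then 1 else 0)"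

lemma P_struct_mult_prompt_last:
  assumes "P_struct d m P" "p < 3*d + 2*m + 2"
  shows "(\<Sum>q<3*d + 2*m + 2. P p q * ac_prompt d m n gam phiV phiP lam w r s a q n)
    = ac_query d w p"
proof -
  define b where "b = 2*d + m + 1"
  let ?H = "ac_prompt d m n gam phiV phiP lam w r s a"
  have left: "\<forall>i < b. \<forall>c \<le> d + m. P i (b + c) =
          (if i < d \<and> c = m + 1 + i then -1
           else if d \<le> i \<and> i < 2*d \<and> c = m + 1 + (i - d) then 1
           else if i = 2*d \<and> c = 0 then 1 else 0)"
    and right: "\<forall>i \<le> d + m. \<forall>c \<le> d + m. P (b + i) (b + c) = 0"
    using assms(1) unfolding P_struct_def b_def by blast+
  have D: "3*d + 2*m + 2 = b + (d + m + 1)"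
    by (simp add: b_def)
  have "(\<Sum>q<3*d + 2*m + 2. P p q * ?H q n) = (\<Sum>c<d + m + 1. P p (b + c) * ?H (b + c) n)"
    unfolding D sum_lessThan_add by (simp add: ac_prompt_def b_def)
  also have "\<dots> = ac_query d w p"
  proof (cases "p < b")
    case True
    define col where "col = (if p < d then m + 1 + p else if p < 2*d then m + 1 + (p - d) else 0)"
    have "P p (b + c) * ?H (b + c) n = (if c = col then ac_query d w p else 0)"
      if "c < d + m + 1" for c
      using left True that by (auto simp: col_def ac_query_def ac_prompt_def b_def)
    then have "(\<Sum>c<d + m + 1. P p (b + c) * ?H (b + c) n)
        = (\<Sum>c<d + m + 1. if c = col then ac_query d w p else 0)"
      by (intro sum.cong) auto
    also have "\<dots> = ac_query d w p"
      by (auto simp: col_def)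
    finally show ?thesis .
  next
    case False
    have "P p (b + c) = 0" if "c < d + m + 1" for c
      using right[rule_format, of "p - b" c] False that assms(2) by (simp add: b_def)
    then show ?thesis
      using False by (simp add: ac_query_def b_def)
  qed
  finally show ?thesis .
qed

lemma ac_prompt_last_inner_query:
  "(\<Sum>p<3*d + 2*m + 2. ac_prompt d m n gam phiV phiP lam w r s a p n * ac_query d w p) = 0"
  by (intro sum.neutral) (auto simp: ac_prompt_def ac_query_def)

lemma ac_prompt_inner_query:
  assumes "j < n"
  shows "(\<Sum>p<3*d + 2*m + 2. ac_prompt d m n gam phiV phiP lam w r s a p j * ac_query d w p)
    = td_err d gam phiV w r s j"
proof -
  let ?f = "\<lambda>p. ac_prompt d m n gam phiV phiP lam w r s a p j * ac_query d w p"
  have "(\<Sum>p<3*d + 2*m + 2. ?f p) = (\<Sum>p<Suc (d + d). ?f p)"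
    by (rule sum.mono_neutral_right) (auto simp: ac_query_def)
  also have "\<dots> = (\<Sum>p<d. ?f p) + (\<Sum>p<d. ?f (d + p)) + ?f (2*d)"
    by (simp add: sum_lessThan_add mult_2)
  also have "\<dots> = - (\<Sum>p<d. w p * phiV (s j) p) + gam * (\<Sum>p<d. w p * phiV (s (Suc j)) p)
      + r (Suc j)"
    using assms by (simp add: ac_prompt_def ac_query_def sum_distrib_left sum_negf ac_simps)
  finally show ?thesis
    by (simp add: td_err_def inner_n_def)
qed

lemma V_struct_mult_prompt:
  assumes "V_struct d m alpha beta V" "k < m + d"
  shows "(\<Sum>l<3*d + 2*m + 2. V (2*d + m + 2 + k) l * ac_prompt d m n gam phiV phiP lam w r s a l j)
    = (if k < m then alpha * ac_prompt d m n gam phiV phiP lam w r s a (2*d + 1 + k) j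
       else beta * ac_prompt d m n gam phiV phiP lam w r s a (k - m) j)"
proof -
  define b where "b = 2*d + m + 1"
  define col where "col = (if k < m then 2*d + 1 + k else k - m)"
  let ?H = "ac_prompt d m n gam phiV phiP lam w r s a"
  have "1 \<le> Suc k \<and> Suc k \<le> d + m"
    using assms(2) by simp
  then have left: "\<forall>l < b. V (b + Suc k) l = (if Suc k \<le> m \<and> l = 2*d + 1 + (Suc k - 1) then alpha
        else if m < Suc k \<and> l = Suc k - m - 1 then beta else 0)"
    and right: "\<forall>l \<le> d + m. V (b + Suc k) (b + l) = 0"
    using assms(1) unfolding V_struct_def b_def by blast+
  have row: "V (b + Suc k) l = (if k < m \<and> l = 2*d + 1 + k then alpha
      else if m \<le> k \<and> l = k - m then beta else 0)" if "l < 3*d + 2*m + 2" for l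
  proof (cases "l < b")
    case True
    then show ?thesis
      using left by auto
  next
    case False
    have "l - b \<le> d + m"
      using that by (simp add: b_def)
    then have "V (b + Suc k) (b + (l - b)) = 0"
      using right by blast
    then show ?thesis
      using False assms(2) by (auto simp: b_def)
  qed
  have "(\<Sum>l<3*d + 2*m + 2. V (b + Suc k) l * ?H l j)
      = (\<Sum>l<3*d + 2*m + 2. if l = col then (if k < m then alpha else beta) * ?H col j else 0)"
    using row by (intro sum.cong) (auto simp: col_def)
  also have "\<dots> = (if k < m then alpha else beta) * ?H col j"
    using assms(2) by (auto simp: col_def)
  finally show ?thesis
    by (simp add: b_def col_def)
qed

theorem theorem3:
  fixes d m n :: nat and gam alpha beta c :: real
    and P V :: "nat \<Rightarrow> nat \<Rightarrow> real"
    and phiV :: "'s \<Rightarrow> nat \<Rightarrow> real"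
    and phiP :: "'s \<Rightarrow> 'a::finite \<Rightarrow> nat \<Rightarrow> real"
    and lam w r :: "nat \<Rightarrow> real"
    and s :: "nat \<Rightarrow> 's" and a :: "nat \<Rightarrow> 'a"
  assumes "d \<ge> 1" and "m \<ge> 1" and "n \<ge> 1"
    and "0 \<le> gam" and "gam < 1" and "alpha > 0" and "beta > 0"
    and "P_struct d m P" and "V_struct d m alpha beta V"
    and "c \<noteq> 0"
  shows "\<forall>k < m + d.
     tf_readout (3*d + 2*m + 2) n (d + m) (\<lambda>i j. c * P i j) (\<lambda>i j. V i j / c)
       (ac_prompt d m n gam phiV phiP lam w r s a) k
     = (if k < m then lam_AC d m n alpha gam phiV phiP lam w r s a k
        else w_AC d n beta gam phiV w r s (k - m))"
proof (intro allI impI)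
  fix k assume k: "k < m + d"
  let ?H = "ac_prompt d m n gam phiV phiP lam w r s a"
  let ?D = "3*d + 2*m + 2"
  let ?i = "2*d + m + 2 + k"
  let ?x = "\<lambda>j. if k < m then alpha * ?H (2*d + 1 + k) j else beta * ?H (k - m) j"
  have "tf_readout ?D n (d + m) (\<lambda>i j. c * P i j) (\<lambda>i j. V i j / c) ?H k = lsa_out ?D n P V ?H ?i n"
    using \<open>c \<noteq> 0\<close> by (simp add: tf_readout_def lsa_out_rescale add.commute add.left_commute)
  also have "\<dots> = ?H ?i n + 1 / real n *
      (\<Sum>j\<le>n. (\<Sum>l<?D. V ?i l * ?H l j) * (\<Sum>p<?D. ?H p j * ac_query d w p))"
    using \<open>P_struct d m P\<close> by (intro lsa_out_via_query P_struct_mult_prompt_last)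
  also have "\<dots> = ?H ?i n + 1 / real n * (\<Sum>j<n. ?x j * td_err d gam phiV w r s j)"
  proof -
    have "(\<Sum>l<?D. V ?i l * ?H l j) = ?x j" for j
      using \<open>V_struct d m alpha beta V\<close> k by (rule V_struct_mult_prompt)
    moreover have "(\<Sum>j<n. ?x j * (\<Sum>p<?D. ?H p j * ac_query d w p))
        = (\<Sum>j<n. ?x j * td_err d gam phiV w r s j)"
      by (intro sum.cong refl) (simp only: lessThan_iff ac_prompt_inner_query)
    ultimately show ?thesis
      unfolding lessThan_Suc_atMost[symmetric] sum.lessThan_Suc ac_prompt_last_inner_query by simp
  qed
  also have "\<dots> = (if k < m then lam_AC d m n alpha gam phiV phiP lam w r s a k
        else w_AC d n beta gam phiV w r s (k - m))"
    using k by (auto simp: lam_AC_def w_AC_def ac_prompt_def sum_distrib_left ac_simps intro!: sum.cong)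
  finally show "tf_readout ?D n (d + m) (\<lambda>i j. c * P i j) (\<lambda>i j. V i j / c) ?H k = \<dots>" .
qed

end
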